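(* Let $p,n\in\mathbb N$ with $p\ge n\ge 5$ and $n-1\nmid p$. Then $$\frac{(n-2)p}{2}-\frac{(n-1)^2}{8}\le ex(p;T_n^2)\le \frac{(n-2)(p-1)}{2}.$$
   Context: All graphs are finite and simple; a graph "contains" $H$ if it has a subgraph isomorphic to $H$. For a graph $L$ and $p\in\mathbb N$, $ex(p;L)$ is the maximum number of edges in a graph on $p$ vertices containing no copy of $L$. For $n\ge 5$, $T_n^2$ is the tree with vertex set $\{v_0,\ldots,v_{n-1}\}$ and edge set $\{v_0v_1,\ldots,v_0v_{n-3},\,v_{n-3}v_{n-2},\,v_{n-3}v_{n-1}\}$. *)

theory Defs
  imports Complex_Main
begin

definition simple_graph :: "'a set \<Rightarrow> 'a set set \<Rightarrow> bool" where
  "simple_graph V E \<longleftrightarrow> finite V \<and> (\<forall>e\<in>E. e \<subseteq> V \<and> card e = 2)"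

definition contains_graph :: "'a set \<Rightarrow> 'a set set \<Rightarrow> 'b set \<Rightarrow> 'b set set \<Rightarrow> bool" where
  "contains_graph V E VL EL \<longleftrightarrow>
     (\<exists>f. inj_on f VL \<and> f ` VL \<subseteq> V \<and> (\<forall>e\<in>EL. f ` e \<in> E))"

definition ex :: "nat \<Rightarrow> 'b set \<Rightarrow> 'b set set \<Rightarrow> nat" where
  "ex p VL EL = Max {card E | E. simple_graph {0..<p} E \<and> \<not> contains_graph {0..<p} E VL EL}"

definition T2_vertices :: "nat \<Rightarrow> nat set" where
  "T2_vertices n = {0..<n}"

definition T2_edges :: "nat \<Rightarrow> nat set set" where
  "T2_edges n = {{0, i} | i. 1 \<le> i \<and> i \<le> n - 3} \<union> {{n - 3, n - 2}, {n - 3, n - 1}}"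

end

theory Submission
  imports Defs
begin

(* Upper bound.  Let G be a T_n^2-free simple graph on V, n >= 5, with n-1 not dividing |V|.
   By strong induction on |V| the degree sum of G is at most (n-2)(|V|-1); the handshake
   lemma turns this into |E| <= (n-2)(|V|-1)/2.  The induction splits on the maximum degree:
     - some vertex has degree >= n-1: every neighbour of such a vertex has tiny degree
       (otherwise a copy of T_n^2 appears), and double counting the edges at high vertices
       gives the bound;
     - all degrees are <= n-3: the bound is immediate;
     - the maximum degree is n-2, attained at a: the closed neighbourhood S of a has n-1
       vertices.  If an edge leaves S, the degrees inside S are forced down and the bound
       follows by counting; otherwise S is a union of components and the induction
       hypothesis applies to G - S (whose order is still not divisible by n-1).
   All "forced" facts come from one embedding lemma producing a copy of T_n^2.

   Lower bound.  Cutting {0..<p} into consecutive blocks of n-1 vertices and taking a clique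
   on each block gives a T_n^2-free graph (T_n^2 is connected with n vertices) whose edge
   number is at least (n-2)p/2 - (n-1)^2/8. *)

definition nbhd :: "'a set \<Rightarrow> 'a set set \<Rightarrow> 'a \<Rightarrow> 'a set" where
  "nbhd V E v = {u\<in>V. {v,u} \<in> E}"

abbreviation degree :: "'a set \<Rightarrow> 'a set set \<Rightarrow> 'a \<Rightarrow> nat" where
  "degree V E v \<equiv> card (nbhd V E v)"

abbreviation T2_free :: "nat \<Rightarrow> 'a set \<Rightarrow> 'a set set \<Rightarrow> bool" where
  "T2_free n V E \<equiv> \<not> contains_graph V E (T2_vertices n) (T2_edges n)"

lemma edge_distinct: "simple_graph V E \<Longrightarrow> {a,b} \<in> E \<Longrightarrow> a \<noteq> b"
  unfolding simple_graph_def by fastforce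

lemma nbhd_edge: "simple_graph V E \<Longrightarrow> u \<in> nbhd V E v \<longleftrightarrow> {v,u} \<in> E"
  unfolding simple_graph_def nbhd_def by blast

lemma nbhd_sym: "simple_graph V E \<Longrightarrow> u \<in> nbhd V E v \<longleftrightarrow> v \<in> nbhd V E u"
  by (simp add: nbhd_edge insert_commute)

lemma nbhd_subset: "simple_graph V E \<Longrightarrow> nbhd V E v \<subseteq> V - {v}"
  unfolding nbhd_def using edge_distinct by fastforce

lemma nbhd_finite: "simple_graph V E \<Longrightarrow> finite (nbhd V E v)"
  using nbhd_subset unfolding simple_graph_def by (meson finite_Diff finite_subset)

(* If a is adjacent to b and to a further n-4 vertices L, and b has two
   neighbours x, y outside L and different from a, then the vertex sequence
   a, L, b, x, y is a copy of T_n^2 (a is v_0, b is v_{n-3}). *)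
lemma forked_star_contains_T2:
  assumes n: "n \<ge> 4" and sg: "simple_graph V E"
    and ab: "{a,b} \<in> E" and bx: "{b,x} \<in> E" and "{b,y} \<in> E" and "x \<noteq> y" "x \<noteq> a" "y \<noteq> a"
    and L: "L \<subseteq> nbhd V E a" "card L = n - 4" "b \<notin> L" "x \<notin> L" "y \<notin> L"
  shows "contains_graph V E (T2_vertices n) (T2_edges n)"
proof -
  obtain ls where ls: "set ls = L" "distinct ls"
    using finite_distinct_list finite_subset[OF L(1) nbhd_finite[OF sg]] by blast
  have len: "length ls = n - 4" using distinct_card[OF ls(2)] ls(1) L(2) by simp
  define xs where "xs = a # ls @ [b, x, y]"
  have "a \<notin> L" using L(1) nbhd_subset[OF sg] by blast
  moreover have "a \<noteq> b" "b \<noteq> x" "b \<noteq> y" using assms edge_distinct[OF sg] by auto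
  ultimately have "distinct xs" using assms ls unfolding xs_def by auto
  moreover have len_xs: "length xs = n" using len n unfolding xs_def by simp
  ultimately have "inj_on ((!) xs) {0..<n}" by (simp add: inj_on_nth)
  moreover have "(!) xs ` {0..<n} \<subseteq> V"
  proof -
    have "(!) xs ` {0..<n} = set xs" using len_xs by (auto simp: set_conv_nth)
    moreover have "{a, b, x, y} \<subseteq> V"
      using ab bx \<open>{b,y} \<in> E\<close> sg unfolding simple_graph_def by blast
    moreover have "L \<subseteq> V" using L(1) nbhd_subset[OF sg] by blast
    ultimately show ?thesis using ls(1) unfolding xs_def by auto
  qed
  moreover have "(!) xs ` e \<in> E" if "e \<in> T2_edges n" for e
  proof -
    have head: "length (a # ls) = n - 3" "xs = (a # ls) @ [b, x, y]"
      using len n unfolding xs_def by auto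
    have "xs ! (n - 3 + k) = [b, x, y] ! k" for k
      unfolding head(2) head(1)[symmetric] by (rule nth_append_length_plus)
    from this[of 0] this[of 1] this[of 2] n
    have tail: "xs ! (n-3) = b" "xs ! (n-2) = x" "xs ! (n-1) = y"
      by (simp_all add: numeral_eq_Suc Suc_diff_Suc)
    have leaf: "{a, xs ! i} \<in> E" if "1 \<le> i" "i \<le> n - 3" for i
    proof (cases "i = n - 3")
      case False
      then have idx: "i - 1 < length ls" using that len by auto
      then have "xs ! i = ls ! (i - 1)" using that unfolding xs_def
        by (simp add: nth_append nth_Cons')
      moreover have "ls ! (i - 1) \<in> L" using idx ls(1) by auto
      ultimately show ?thesis using L(1) nbhd_edge[OF sg] by auto
    qed (use tail ab in simp)
    from that consider i where "e = {0,i}" "1 \<le> i" "i \<le> n - 3" | "e = {n-3, n-2}" | "e = {n-3, n-1}"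
      unfolding T2_edges_def by blast
    then show ?thesis
      by cases (use leaf tail assms in \<open>auto simp: xs_def\<close>)
  qed
  ultimately show ?thesis unfolding contains_graph_def T2_vertices_def by blast
qed

lemma obtain_two_elements:
  assumes "2 \<le> card A" obtains x y where "x \<in> A" "y \<in> A" "x \<noteq> y"
proof -
  obtain T where "T \<subseteq> A" "card T = 2" using obtain_subset_with_card_n[OF assms] by metis
  then show ?thesis using that card_2_iff by (metis insert_subset)
qed

lemma obtain_element:
  assumes "1 \<le> card A" obtains x where "x \<in> A"
  using assms by (metis card.empty ex_in_conv not_one_le_zero)

lemma card_diff_lower: "finite B \<Longrightarrow> card B \<le> m \<Longrightarrow> card A - m \<le> card (A - B)"
  using diff_card_le_card_Diff[of B A] by linarith

(* In a T_n^2-free graph a neighbour u of a vertex of degree >= n-1 has degree at most 2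
   (at most 1 when n = 5); in both cases twice its degree is at most n-2. *)
lemma neighbour_of_high_degree:
  assumes n: "n \<ge> 5" and sg: "simple_graph V E" and free: "T2_free n V E"
    and high: "degree V E a \<ge> n - 1" and u: "u \<in> nbhd V E a"
  shows "2 * degree V E u \<le> n - 2"
proof -
  have au: "{a,u} \<in> E" "{u,a} \<in> E" using u nbhd_edge[OF sg] by (auto simp: insert_commute)
  have small_cards: "card {u, x, y} \<le> 3" "card {u, z} \<le> 2" for x y z :: 'a
    by (simp_all add: card_insert_if)
  have le2: "degree V E u \<le> 2"
  proof (rule ccontr)
    assume "\<not> ?thesis"
    then have "2 \<le> card (nbhd V E u - {a})"
      using card_diff_lower[of "{a}" 1 "nbhd V E u"] by simp
    then obtain x y where xy: "x \<in> nbhd V E u - {a}" "y \<in> nbhd V E u - {a}" "x \<noteq> y"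
      by (rule obtain_two_elements)
    have "n - 4 \<le> card (nbhd V E a - {u, x, y})"
      using card_diff_lower[of "{u, x, y}" 3 "nbhd V E a"] small_cards(1) high by simp
    then obtain L where L: "L \<subseteq> nbhd V E a - {u, x, y}" "card L = n - 4"
      using obtain_subset_with_card_n by metis
    have "contains_graph V E (T2_vertices n) (T2_edges n)"
      by (rule forked_star_contains_T2[of n V E a u x y L]) (use n sg au xy L nbhd_edge[OF sg] in auto)
    with free show False by blast
  qed
  have le1: "degree V E u \<le> 1" if "n = 5"
  proof (rule ccontr)
    assume "\<not> ?thesis"
    then have "1 \<le> card (nbhd V E u - {a})"
      using card_diff_lower[of "{a}" 1 "nbhd V E u"] by simp
    then obtain z where z: "z \<in> nbhd V E u - {a}" by (rule obtain_element)
    have "2 \<le> card (nbhd V E a - {u, z})"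
      using card_diff_lower[of "{u, z}" 2 "nbhd V E a"] small_cards(2) high that by simp
    then obtain x y where xy: "x \<in> nbhd V E a - {u, z}" "y \<in> nbhd V E a - {u, z}" "x \<noteq> y"
      by (rule obtain_two_elements)
    have "contains_graph V E (T2_vertices n) (T2_edges n)"
      by (rule forked_star_contains_T2[of n V E u a x y "{z}"])
        (use that sg au xy z nbhd_edge[OF sg] nbhd_subset[OF sg] in auto)
    with free show False by blast
  qed
  show ?thesis using le1 le2 n by (cases "n = 5") auto
qed

lemma heavy_neighbour_stays_in_ball:
  assumes n: "n \<ge> 5" and sg: "simple_graph V E" and free: "T2_free n V E"
    and a: "degree V E a = n - 2" and b: "b \<in> nbhd V E a" and heavy: "degree V E b \<ge> 3"
  shows "nbhd V E b \<subseteq> insert a (nbhd V E a)"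
proof
  fix z assume z: "z \<in> nbhd V E b"
  show "z \<in> insert a (nbhd V E a)"
  proof (rule ccontr)
    assume out: "z \<notin> insert a (nbhd V E a)"
    have "card {a, z} \<le> 2" by (simp add: card_insert_if)
    then have "1 \<le> card (nbhd V E b - {a, z})"
      using card_diff_lower[of "{a, z}" 2 "nbhd V E b"] heavy by simp
    then obtain y where y: "y \<in> nbhd V E b - {a, z}" by (rule obtain_element)
    have "card {b, y} \<le> 2" by (simp add: card_insert_if)
    then have "n - 4 \<le> card (nbhd V E a - {b, y})"
      using card_diff_lower[of "{b, y}" 2 "nbhd V E a"] a by simp
    then obtain L where L: "L \<subseteq> nbhd V E a - {b, y}" "card L = n - 4"
      using obtain_subset_with_card_n by metis
    have "contains_graph V E (T2_vertices n) (T2_edges n)"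
      by (rule forked_star_contains_T2[of n V E a b z y L])
        (use n sg b y z out L nbhd_edge[OF sg] in auto)
    with free show False by blast
  qed
qed

lemma degree_eq_incident_edges:
  assumes sg: "simple_graph V E"
  shows "degree V E v = card {e\<in>E. v \<in> e}"
proof (rule bij_betw_same_card)
  show "bij_betw (\<lambda>u. {v,u}) (nbhd V E v) {e\<in>E. v \<in> e}"
  proof (rule bij_betw_imageI)
    show "inj_on (\<lambda>u. {v, u}) (nbhd V E v)"
      by (rule inj_onI) (metis doubleton_eq_iff)
    have "e \<in> (\<lambda>u. {v, u}) ` nbhd V E v" if "e \<in> E" "v \<in> e" for e
    proof -
      have "card e = 2" using that sg unfolding simple_graph_def by blast
      then obtain x y where "e = {x, y}" by (meson card_2_iff)
      then have "e = {v, if x = v then y else x}" using that(2) by auto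
      then show ?thesis using that nbhd_edge[OF sg] by blast
    qed
    then show "(\<lambda>u. {v, u}) ` nbhd V E v = {e\<in>E. v \<in> e}"
      using nbhd_edge[OF sg] by blast
  qed
qed

lemma handshake:
  assumes sg: "simple_graph V E"
  shows "(\<Sum>v\<in>V. degree V E v) = 2 * card E"
proof -
  have fV: "finite V" and E: "\<And>e. e \<in> E \<Longrightarrow> e \<subseteq> V \<and> card e = 2"
    using sg unfolding simple_graph_def by auto
  have fE: "finite E" using finite_subset[of E "Pow V"] fV E by blast
  have "(\<Sum>v\<in>V. degree V E v) = (\<Sum>v\<in>V. \<Sum>e\<in>E. of_bool (v \<in> e))"
    using fE by (simp add: degree_eq_incident_edges[OF sg] Int_def conj_commute)
  also have "\<dots> = (\<Sum>e\<in>E. \<Sum>v\<in>V. of_bool (v \<in> e))"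
    by (rule sum.swap)
  also have "\<dots> = (\<Sum>e\<in>E. card e)"
    using fV E by (intro sum.cong) (auto simp: Int_absorb1 Int_def[symmetric])
  also have "\<dots> = 2 * card E"
    using E by simp
  finally show ?thesis .
qed

lemma sum_degree_double_count:
  assumes sg: "simple_graph V E" and B: "B \<subseteq> V"
  shows "(\<Sum>v\<in>B. degree V E v) = (\<Sum>u\<in>V. card (nbhd V E u \<inter> B))"
proof -
  have fV: "finite V" using sg unfolding simple_graph_def by blast
  have fB: "finite B" using finite_subset[OF B fV] .
  have "V \<inter> nbhd V E v = nbhd V E v" for v using nbhd_subset[OF sg] by blast
  then have "(\<Sum>v\<in>B. degree V E v) = (\<Sum>v\<in>B. \<Sum>u\<in>V. of_bool (u \<in> nbhd V E v))"
    using fV by (simp add: Int_def)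
  also have "\<dots> = (\<Sum>u\<in>V. \<Sum>v\<in>B. of_bool (u \<in> nbhd V E v))"
    by (rule sum.swap)
  also have "\<dots> = (\<Sum>u\<in>V. card (nbhd V E u \<inter> B))"
    using fB nbhd_sym[OF sg] by (intro sum.cong) (auto simp: Int_def conj_commute)
  finally show ?thesis .
qed

(* Degree-sum bound when some vertex has degree >= n-1.  Such high vertices form an independent
   set, and each low vertex u pays its degree plus its number of high neighbours, which is
   at most n-2 by the previous lemmas. *)
lemma degree_sum_with_high_vertex:
  assumes n: "n \<ge> 5" and sg: "simple_graph V E" and free: "T2_free n V E"
    and high: "\<exists>a\<in>V. degree V E a \<ge> n - 1"
  shows "(\<Sum>v\<in>V. degree V E v) \<le> (n - 2) * (card V - 1)"
proof -
  define B where "B = {v\<in>V. degree V E v \<ge> n - 1}"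
  have fV: "finite V" using sg unfolding simple_graph_def by blast
  have BV: "B \<subseteq> V" and fB: "finite B" and "B \<noteq> {}"
    using high fV unfolding B_def by auto
  then have card_B: "card B \<ge> 1" by (simp add: Suc_leI card_gt_0_iff)
  have low: "2 * degree V E u \<le> n - 2" if "nbhd V E u \<inter> B \<noteq> {}" for u
    using that neighbour_of_high_degree[OF n sg free] nbhd_sym[OF sg] unfolding B_def by blast
  have B_independent: "nbhd V E u \<inter> B = {}" if "u \<in> B" for u
    using low[of u] that n unfolding B_def by force
  have term_bound: "degree V E u + card (nbhd V E u \<inter> B) \<le> n - 2" if "u \<in> V - B" for u
  proof (cases "nbhd V E u \<inter> B = {}")
    case True
    then show ?thesis using that unfolding B_def by auto
  next
    case False
    have "card (nbhd V E u \<inter> B) \<le> degree V E u"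
      by (rule card_mono) (use nbhd_finite[OF sg] in auto)
    then show ?thesis using low[OF False] by linarith
  qed
  have "(\<Sum>v\<in>V. degree V E v) = (\<Sum>u\<in>V-B. degree V E u) + (\<Sum>v\<in>B. degree V E v)"
    by (rule sum.subset_diff[OF BV fV])
  also have "(\<Sum>v\<in>B. degree V E v) = (\<Sum>u\<in>V-B. card (nbhd V E u \<inter> B))"
  proof -
    have "(\<Sum>u\<in>B. card (nbhd V E u \<inter> B)) = 0" using B_independent by simp
    then show ?thesis using sum_degree_double_count[OF sg BV]
        sum.subset_diff[OF BV fV, of "\<lambda>u. card (nbhd V E u \<inter> B)"] by simp
  qed
  also have "(\<Sum>u\<in>V-B. degree V E u) + \<dots> = (\<Sum>u\<in>V-B. degree V E u + card (nbhd V E u \<inter> B))"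
    by (simp add: sum.distrib)
  also have "\<dots> \<le> (n - 2) * card (V - B)"
    using sum_bounded_above[of "V - B" _ "n - 2"] term_bound by (simp add: mult.commute)
  also have "\<dots> \<le> (n - 2) * (card V - 1)"
    using card_Diff_subset[OF fB BV] card_B by (intro mult_le_mono2) linarith
  finally show ?thesis .
qed

lemma degree_sum_small_max_degree:
  assumes sg: "simple_graph V E" and max_deg: "\<forall>v\<in>V. degree V E v \<le> n - 3"
  shows "(\<Sum>v\<in>V. degree V E v) \<le> (n - 2) * (card V - 1)"
proof (cases "card V \<le> n - 2")
  case True
  have fV: "finite V" using sg unfolding simple_graph_def by blast
  have "degree V E v \<le> card (V - {v})" for v
    using card_mono[OF _ nbhd_subset[OF sg]] fV by blast
  then have "degree V E v \<le> card V - 1" if "v \<in> V" for v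
    using that fV by (metis card_Diff_singleton)
  then have "(\<Sum>v\<in>V. degree V E v) \<le> card V * (card V - 1)"
    using sum_bounded_above[of V _ "card V - 1"] by simp
  also have "\<dots> \<le> (n - 2) * (card V - 1)" using True by simp
  finally show ?thesis .
next
  case False
  have "(\<Sum>v\<in>V. degree V E v) \<le> card V * (n - 3)"
    using sum_bounded_above[of V _ "n - 3"] max_deg by simp
  also have "\<dots> \<le> (n - 2) * (card V - 1)"
  proof (cases "n \<le> 3")
    case False
    define m k where "m = n - 3" and "k = card V - (n - 1)"
    have "n = m + 3" "card V = k + m + 2"
      using False \<open>\<not> card V \<le> n - 2\<close> unfolding m_def k_def by auto
    then show ?thesis by (simp add: algebra_simps)
  qed simp
  finally show ?thesis .
qed

lemma leaky_ball_degrees: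
  assumes n: "n \<ge> 5" and sg: "simple_graph V E" and free: "T2_free n V E"
    and a: "degree V E a = n - 2" and c: "c \<in> nbhd V E a"
    and z: "z \<in> nbhd V E c" "z \<notin> insert a (nbhd V E a)"
  shows leaky_degree: "degree V E c \<le> 2"
    and other_degree: "u \<in> nbhd V E a - {c} \<Longrightarrow> degree V E u \<le> n - 3"
proof -
  note heavy = heavy_neighbour_stays_in_ball[OF n sg free a]
  show c_le: "degree V E c \<le> 2"
    using heavy[OF c] z by fastforce
  assume u: "u \<in> nbhd V E a - {c}"
  show "degree V E u \<le> n - 3"
  proof (cases "degree V E u \<ge> 3")
    case True
    have "c \<notin> nbhd V E u"
    proof
      assume "c \<in> nbhd V E u"
      then have "{a, z, u} \<subseteq> nbhd V E c" using u c z(1) nbhd_sym[OF sg] by auto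
      moreover have "card {a, z, u} = 3"
      proof -
        have "a \<noteq> u" "z \<noteq> u" "z \<noteq> a" using u z(2) nbhd_subset[OF sg] by auto
        then show ?thesis by simp
      qed
      ultimately have "3 \<le> degree V E c" by (metis card_mono nbhd_finite[OF sg])
      with c_le show False by simp
    qed
    then have "nbhd V E u \<subseteq> insert a (nbhd V E a) - {u, c}"
      using heavy[of u] u True nbhd_subset[OF sg] by blast
    then have "degree V E u \<le> card (insert a (nbhd V E a) - {u, c})"
      by (intro card_mono) (simp_all add: nbhd_finite[OF sg])
    also have "\<dots> = n - 3"
    proof -
      have "a \<notin> nbhd V E a" using nbhd_subset[OF sg] by blast
      then have "card (insert a (nbhd V E a)) = n - 1"
        using a n nbhd_finite[OF sg] by simp
      moreover have "{u, c} \<subseteq> insert a (nbhd V E a)" "card {u, c} = 2" using u c by auto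
      ultimately show ?thesis using nbhd_finite[OF sg] by (simp add: card_Diff_subset)
    qed
    finally show ?thesis by simp
  qed (use n in simp)
qed

lemma closed_nbhd:
  assumes sg: "simple_graph V E" and v: "v \<in> V"
  shows closed_nbhd_subset: "insert v (nbhd V E v) \<subseteq> V"
    and card_closed_nbhd: "card (insert v (nbhd V E v)) = Suc (degree V E v)"
proof -
  have "nbhd V E v \<subseteq> V - {v}" by (rule nbhd_subset[OF sg])
  then show "insert v (nbhd V E v) \<subseteq> V" using v by blast
  show "card (insert v (nbhd V E v)) = Suc (degree V E v)"
  proof (rule card_insert_disjoint)
    show "finite (nbhd V E v)" by (rule nbhd_finite[OF sg])
    show "v \<notin> nbhd V E v" using \<open>nbhd V E v \<subseteq> V - {v}\<close> by blast
  qed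
qed

lemma degree_sum_leaky_ball:
  assumes n: "n \<ge> 5" and sg: "simple_graph V E" and free: "T2_free n V E"
    and max_deg: "\<forall>v\<in>V. degree V E v \<le> n - 2"
    and a: "a \<in> V" "degree V E a = n - 2" and c: "c \<in> nbhd V E a"
    and z: "z \<in> nbhd V E c" "z \<notin> insert a (nbhd V E a)"
  shows "(\<Sum>v\<in>V. degree V E v) \<le> (n - 2) * (card V - 1)"
proof -
  define S where "S = insert a (nbhd V E a)"
  have fV: "finite V" using sg unfolding simple_graph_def by blast
  have fN: "finite (nbhd V E a)" and aN: "a \<notin> nbhd V E a"
    using nbhd_finite[OF sg] nbhd_subset[OF sg] by auto
  have SV: "S \<subseteq> V" and card_S: "card S = n - 1"
    using closed_nbhd[OF sg a(1)] a(2) n unfolding S_def by auto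
  have "(\<Sum>v\<in>V. degree V E v) = (\<Sum>v\<in>V-S. degree V E v) + (\<Sum>v\<in>S. degree V E v)"
    by (rule sum.subset_diff[OF SV fV])
  also have "(\<Sum>v\<in>S. degree V E v)
      = degree V E a + degree V E c + (\<Sum>v\<in>nbhd V E a - {c}. degree V E v)"
    using fN aN c by (simp add: S_def sum.remove)
  also have "(\<Sum>v\<in>nbhd V E a - {c}. degree V E v) \<le> (n - 3) * (n - 3)"
    using sum_bounded_above[of "nbhd V E a - {c}" _ "n - 3"] c a fN
      other_degree[OF n sg free a(2) c z] by simp
  also have "(\<Sum>v\<in>V-S. degree V E v) \<le> (n - 2) * (card V - (n - 1))"
    using sum_bounded_above[of "V - S" _ "n - 2"] max_deg card_Diff_subset[OF _ SV] fV SV card_S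
    by (simp add: finite_subset mult.commute)
  finally have "(\<Sum>v\<in>V. degree V E v)
      \<le> (n - 2) * (card V - (n - 1)) + (n - 2) + 2 + (n - 3) * (n - 3)"
    using a(2) leaky_degree[OF n sg free a(2) c z] by simp
  also have "\<dots> \<le> (n - 2) * (card V - 1)"
  proof -
    define m w where "m = n - 5" and "w = card V - (n - 1)"
    have "card S \<le> card V" using card_mono[OF fV SV] .
    then have "n = m + 5" "card V = w + m + 4" using n card_S unfolding m_def w_def by auto
    then show ?thesis by (simp add: algebra_simps)
  qed
  finally show ?thesis .
qed

definition induced :: "'a set set \<Rightarrow> 'a set \<Rightarrow> 'a set set" where
  "induced E W = {e\<in>E. e \<subseteq> W}"

lemma induced_simple: "simple_graph V E \<Longrightarrow> W \<subseteq> V \<Longrightarrow> simple_graph W (induced E W)"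
  unfolding simple_graph_def induced_def using finite_subset by blast

lemma contains_graph_mono:
  assumes "contains_graph W F VL EL" and "W \<subseteq> V" and "F \<subseteq> E"
  shows "contains_graph V E VL EL"
proof -
  obtain f where "inj_on f VL" "f ` VL \<subseteq> W" "\<forall>e\<in>EL. f ` e \<in> F"
    using assms(1) unfolding contains_graph_def by blast
  then show ?thesis using assms(2,3) unfolding contains_graph_def by blast
qed

lemma induced_T2_free: "T2_free n V E \<Longrightarrow> W \<subseteq> V \<Longrightarrow> T2_free n W (induced E W)"
  using contains_graph_mono[of W "induced E W" _ _ V E] unfolding induced_def by blast

lemma nbhd_outside_closed_set:
  assumes sg: "simple_graph V E" and closed: "\<forall>c\<in>S. nbhd V E c \<subseteq> S" and v: "v \<in> V - S"
  shows "nbhd (V - S) (induced E (V - S)) v = nbhd V E v"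
proof -
  have "nbhd V E v \<inter> S = {}" using closed v nbhd_sym[OF sg] by blast
  then show ?thesis
    using v nbhd_edge[OF sg] nbhd_subset[OF sg] unfolding nbhd_def induced_def by auto
qed

lemma degree_sum_closed_ball:
  assumes sg: "simple_graph V E" and SV: "S \<subseteq> V" and card_S: "card S = n - 1"
    and closed: "\<forall>c\<in>S. nbhd V E c \<subseteq> S" and max_deg: "\<forall>v\<in>V. degree V E v \<le> n - 2"
    and rest_nonempty: "V - S \<noteq> {}"
    and rest: "(\<Sum>v\<in>V-S. degree (V-S) (induced E (V-S)) v) \<le> (n - 2) * (card (V - S) - 1)"
  shows "(\<Sum>v\<in>V. degree V E v) \<le> (n - 2) * (card V - 1)"
proof -
  have fV: "finite V" using sg unfolding simple_graph_def by blast
  have card_rest: "card (V - S) \<ge> 1" "card V = card (V - S) + (n - 1)"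
    using rest_nonempty card_S card_Diff_subset[OF finite_subset[OF SV fV] SV] card_mono[OF fV SV] fV
    by (auto simp: Suc_le_eq card_gt_0_iff)
  have "(\<Sum>v\<in>V. degree V E v) = (\<Sum>v\<in>V-S. degree V E v) + (\<Sum>v\<in>S. degree V E v)"
    by (rule sum.subset_diff[OF SV fV])
  also have "(\<Sum>v\<in>V-S. degree V E v) = (\<Sum>v\<in>V-S. degree (V-S) (induced E (V-S)) v)"
    using nbhd_outside_closed_set[OF sg closed] by simp
  also have "(\<Sum>v\<in>S. degree V E v) \<le> (n - 2) * (n - 1)"
    using sum_bounded_above[of S _ "n - 2"] max_deg SV card_S by (simp add: subset_iff mult.commute)
  finally have "(\<Sum>v\<in>V. degree V E v) \<le> (n - 2) * (card (V - S) - 1) + (n - 2) * (n - 1)"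
    using rest by linarith
  also have "\<dots> = (n - 2) * (card V - 1)"
  proof -
    have "card V - 1 = (card (V - S) - 1) + (n - 1)" using card_rest by simp
    then show ?thesis by (simp add: add_mult_distrib2)
  qed
  finally show ?thesis .
qed

lemma degree_sum_bound:
  assumes n: "n \<ge> 5"
  shows "simple_graph V E \<Longrightarrow> T2_free n V E \<Longrightarrow> \<not> (n - 1) dvd card V \<Longrightarrow>
    (\<Sum>v\<in>V. degree V E v) \<le> (n - 2) * (card V - 1)"
proof (induction "card V" arbitrary: V E rule: less_induct)
  case less
  note sg = less.prems(1) and free = less.prems(2) and indivisible = less.prems(3)
  have "(\<exists>a\<in>V. degree V E a \<ge> n - 1) \<or> (\<forall>v\<in>V. degree V E v \<le> n - 3)
      \<or> (\<exists>a\<in>V. degree V E a = n - 2 \<and> (\<forall>v\<in>V. degree V E v \<le> n - 2))"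
    using n by (force simp: not_le)
  then consider (high) "\<exists>a\<in>V. degree V E a \<ge> n - 1" | (small) "\<forall>v\<in>V. degree V E v \<le> n - 3"
    | (max) a where "a \<in> V" "degree V E a = n - 2" "\<forall>v\<in>V. degree V E v \<le> n - 2"
    by blast
  then show ?case
  proof cases
    case high
    then show ?thesis using degree_sum_with_high_vertex[OF n sg free] by blast
  next
    case small
    then show ?thesis using degree_sum_small_max_degree[OF sg] by blast
  next
    case max
    define S where "S = insert a (nbhd V E a)"
    show ?thesis
    proof (cases "\<exists>c\<in>nbhd V E a. \<exists>z\<in>nbhd V E c. z \<notin> S")
      case True
      then show ?thesis
        using degree_sum_leaky_ball[OF n sg free max(3,1,2)] unfolding S_def by blast
    next
      case False
      then have closed: "\<forall>c\<in>S. nbhd V E c \<subseteq> S" unfolding S_def by blast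
      have fV: "finite V" using sg unfolding simple_graph_def by blast
      have SV: "S \<subseteq> V" and card_S: "card S = n - 1"
        using closed_nbhd[OF sg max(1)] max(2) n unfolding S_def by auto
      have card_V: "card V = card (V - S) + (n - 1)"
        using card_Diff_subset[OF finite_subset[OF SV fV] SV] card_mono[OF fV SV] card_S by simp
      then have rest_indivisible: "\<not> (n - 1) dvd card (V - S)" using indivisible by auto
      then have rest_nonempty: "V - S \<noteq> {}" by (metis card.empty dvd_0_right)
      have "card (V - S) < card V" using card_V n by simp
      then have "(\<Sum>v\<in>V-S. degree (V-S) (induced E (V-S)) v) \<le> (n - 2) * (card (V - S) - 1)"
        using less.hyps induced_simple[OF sg] induced_T2_free[OF free] rest_indivisible by blast
      then show ?thesis
        using degree_sum_closed_ball[OF sg SV card_S closed max(3) rest_nonempty] by blast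
    qed
  qed
qed

lemma T2_free_edge_bound:
  assumes n: "n \<ge> 5" and sg: "simple_graph {0..<p} E" and free: "T2_free n {0..<p} E"
    and indivisible: "\<not> (n - 1) dvd p"
  shows "real (card E) \<le> real (n - 2) * (real p - 1) / 2"
proof -
  have "p \<ge> 1" using indivisible by (cases p) auto
  have "2 * card E \<le> (n - 2) * (p - 1)"
    using handshake[OF sg] degree_sum_bound[OF n sg free] indivisible by simp
  then have "2 * real (card E) \<le> real (n - 2) * real (p - 1)"
    by (metis of_nat_le_iff of_nat_mult of_nat_numeral)
  with \<open>p \<ge> 1\<close> show ?thesis by simp
qed

definition block_cliques :: "nat \<Rightarrow> nat \<Rightarrow> nat set set" where
  "block_cliques m p = {{x, y} | x y. x < y \<and> y < p \<and> x div m = y div m}"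

lemma block_cliques_simple: "simple_graph {0..<p} (block_cliques m p)"
  unfolding simple_graph_def block_cliques_def by auto

lemma block_cliques_finite: "finite (block_cliques m p)"
  using block_cliques_simple[of p m] finite_subset[of _ "Pow {0..<p}"]
  unfolding simple_graph_def by blast

lemma same_block_iff:
  fixes m p x :: nat assumes "m > 0" "x < p"
  shows "x div m = p div m \<longleftrightarrow> p - p mod m \<le> x"
proof
  assume "x div m = p div m"
  then show "p - p mod m \<le> x"
    by (metis div_mult_mod_eq le_add1 minus_mod_eq_div_mult [symmetric])
next
  assume h: "p - p mod m \<le> x"
  have "p - p mod m = m * (p div m)" by (simp add: minus_mod_eq_mult_div)
  with h have "p div m \<le> x div m"
    by (metis assms(1) div_le_mono div_mult_self1_is_m)
  moreover have "x div m \<le> p div m" using assms(2) by (simp add: div_le_mono)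
  ultimately show "x div m = p div m" by simp
qed

lemma block_cliques_Suc:
  assumes "m > 0"
  shows "block_cliques m (Suc p) = block_cliques m p \<union> (\<lambda>x. {x, p}) ` {p - p mod m..<p}"
  using same_block_iff[OF assms] unfolding block_cliques_def
  by (auto simp: less_Suc_eq) (metis less_Suc_eq)+

lemma block_cliques_card_Suc:
  assumes "m > 0"
  shows "card (block_cliques m (Suc p)) = card (block_cliques m p) + p mod m"
proof -
  have "block_cliques m p \<inter> (\<lambda>x. {x, p}) ` {p - p mod m..<p} = {}"
    unfolding block_cliques_def by (auto simp: doubleton_eq_iff)
  moreover have "inj_on (\<lambda>x. {x, p}) {p - p mod m..<p}"
    by (rule inj_onI) (auto simp: doubleton_eq_iff)
  then have "card ((\<lambda>x. {x, p}) ` {p - p mod m..<p}) = p mod m"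
    by (simp add: card_image)
  ultimately show ?thesis
    using block_cliques_Suc[OF assms] block_cliques_finite by (simp add: card_Un_disjoint)
qed

(* Exact edge count: full blocks contribute C(m,2) each, the last partial block C(p mod m, 2). *)
lemma block_cliques_card:
  assumes "m > 0"
  shows "2 * int (card (block_cliques m p))
    = (int m - 1) * (int p - int (p mod m)) + int (p mod m) * (int (p mod m) - 1)"
proof (induction p)
  case 0
  then show ?case by (simp add: block_cliques_def)
next
  case (Suc p)
  note step = block_cliques_card_Suc[OF assms, of p]
  show ?case
  proof (cases "Suc (p mod m) = m")
    case True
    then have "Suc p mod m = 0" by (simp add: mod_Suc)
    moreover have "int m = int (p mod m) + 1" using True by simp
    ultimately show ?thesis using Suc.IH step by (simp add: algebra_simps)
  next
    case False
    then have "Suc p mod m = Suc (p mod m)" by (simp add: mod_Suc)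
    then show ?thesis using Suc.IH step by (simp add: algebra_simps)
  qed
qed

(* The edge count is at least (m-1)p/2 - m^2/8, since r(r-m) >= -m^2/4 for r = p mod m. *)
lemma block_cliques_lower_bound:
  assumes "m > 0"
  shows "(real m - 1) * real p / 2 - (real m)\<^sup>2 / 8 \<le> real (card (block_cliques m p))"
proof -
  define r where "r = p mod m"
  have "2 * real (card (block_cliques m p)) = (real m - 1) * (real p - real r) + real r * (real r - 1)"
    using arg_cong[OF block_cliques_card[OF assms, of p], of real_of_int] unfolding r_def by simp
  moreover have "0 \<le> (real m - 2 * real r)\<^sup>2" by simp
  ultimately show ?thesis by (simp add: power2_eq_square algebra_simps)
qed

(* T_n^2 is connected: a function constant along its edges is constant on its vertices. *)
lemma T2_edges_connected:
  assumes n: "n \<ge> 5" and respects: "\<And>i j. {i, j} \<in> T2_edges n \<Longrightarrow> h i = h j" and i: "i < n"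
  shows "h i = h 0"
proof -
  have leaf: "h j = h 0" if "1 \<le> j" "j \<le> n - 3" for j
  proof -
    have "{0, j} \<in> T2_edges n" using that unfolding T2_edges_def by blast
    from respects[OF this] show ?thesis by simp
  qed
  have fork: "h (n - 2) = h (n - 3)" "h (n - 1) = h (n - 3)"
    using respects[of "n - 3" "n - 2"] respects[of "n - 3" "n - 1"] unfolding T2_edges_def by auto
  have "i = 0 \<or> (1 \<le> i \<and> i \<le> n - 3) \<or> i = n - 2 \<or> i = n - 1" using i by auto
  then show ?thesis using leaf[of i] leaf[of "n - 3"] fork n by auto
qed

(* The construction is T_n^2-free for m = n-1: a copy of the connected tree would lie inside a
   single block, which has only n-1 vertices. *)
lemma block_cliques_T2_free:
  assumes n: "n \<ge> 5"
  shows "T2_free n {0..<p} (block_cliques (n - 1) p)"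
proof
  define m where "m = n - 1"
  assume "contains_graph {0..<p} (block_cliques (n - 1) p) (T2_vertices n) (T2_edges n)"
  then obtain f where inj: "inj_on f {0..<n}" and edges: "\<forall>e\<in>T2_edges n. f ` e \<in> block_cliques m p"
    unfolding contains_graph_def T2_vertices_def m_def by blast
  have "f i div m = f j div m" if "{i, j} \<in> T2_edges n" for i j
  proof -
    have "f ` {i, j} \<in> block_cliques m p" using edges that by blast
    then have "{f i, f j} \<in> block_cliques m p" by simp
    then show ?thesis unfolding block_cliques_def by (auto simp: doubleton_eq_iff)
  qed
  then have same: "f i div m = f 0 div m" if "i < n" for i
    using T2_edges_connected[OF n, of "\<lambda>i. f i div m"] that by blast
  define c where "c = f 0 div m"
  have "f ` {0..<n} \<subseteq> {c * m..<c * m + m}"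
  proof
    fix v assume "v \<in> f ` {0..<n}"
    then obtain i where "i < n" "v = f i" by auto
    then have "v div m = c" using same[of i] unfolding c_def by simp
    moreover have "v mod m < m" using n unfolding m_def by simp
    moreover have "v = c * m + v mod m" using div_mult_mod_eq[of v m] \<open>v div m = c\<close> by simp
    ultimately show "v \<in> {c * m..<c * m + m}" unfolding atLeastLessThan_iff by linarith
  qed
  then have "card (f ` {0..<n}) \<le> card {c * m..<c * m + m}" by (intro card_mono) simp_all
  then have "card (f ` {0..<n}) \<le> m" by simp
  then show False using card_image[OF inj] n unfolding m_def by simp
qed

(* Only finitely many edge numbers occur among graphs on {0..<p}, so ex is a genuine maximum. *)
lemma ex_candidates_finite:
  fixes p :: nat
  shows "finite {card E | E. simple_graph {0..<p} E \<and> \<not> contains_graph {0..<p} E VL EL}"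
proof (rule finite_subset)
  show "{card E | E. simple_graph {0..<p} E \<and> \<not> contains_graph {0..<p} E VL EL}
      \<subseteq> card ` Pow (Pow {0..<p})"
    unfolding simple_graph_def by auto
qed simp

lemma ex_ge:
  assumes "simple_graph {0..<p} E" and "\<not> contains_graph {0..<p} E VL EL"
  shows "card E \<le> ex p VL EL"
  unfolding ex_def using assms by (intro Max_ge[OF ex_candidates_finite]) blast

lemma ex_attained:
  assumes "simple_graph {0..<p} E0" and "\<not> contains_graph {0..<p} E0 VL EL"
  obtains E where "simple_graph {0..<p} E" "\<not> contains_graph {0..<p} E VL EL"
    "card E = ex p VL EL"
proof -
  have "ex p VL EL \<in> {card E | E. simple_graph {0..<p} E \<and> \<not> contains_graph {0..<p} E VL EL}"
    unfolding ex_def using assms by (intro Max_in[OF ex_candidates_finite]) blast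
  then obtain E where "ex p VL EL = card E" "simple_graph {0..<p} E"
      "\<not> contains_graph {0..<p} E VL EL"
    by blast
  then show ?thesis using that by simp
qed

theorem corollary3p1:
  fixes p n :: nat
  assumes "n \<ge> 5" and "p \<ge> n" and "\<not> (n - 1) dvd p"
  shows "real (n - 2) * real p / 2 - (real n - 1)^2 / 8 \<le> real (ex p (T2_vertices n) (T2_edges n))
     \<and> real (ex p (T2_vertices n) (T2_edges n)) \<le> real (n - 2) * (real p - 1) / 2"
proof -
  note construction = block_cliques_simple[of p "n - 1"] block_cliques_T2_free[OF assms(1), of p]
  have "real (n - 2) * real p / 2 - (real n - 1)^2 / 8 \<le> real (card (block_cliques (n - 1) p))"
    using block_cliques_lower_bound[of "n - 1" p] assms(1) by simp
  also have "\<dots> \<le> real (ex p (T2_vertices n) (T2_edges n))"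
    using ex_ge[OF construction] by simp
  finally have lower: "real (n - 2) * real p / 2 - (real n - 1)^2 / 8
      \<le> real (ex p (T2_vertices n) (T2_edges n))" .
  obtain E where E: "simple_graph {0..<p} E" "T2_free n {0..<p} E"
      "card E = ex p (T2_vertices n) (T2_edges n)"
    using ex_attained[OF construction] by blast
  have "real (ex p (T2_vertices n) (T2_edges n)) \<le> real (n - 2) * (real p - 1) / 2"
    using T2_free_edge_bound[OF assms(1) E(1,2) assms(3)] E(3) by simp
  with lower show ?thesis by blast
qed

end
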